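(* Let $X$ be a square-free word of length $4$ and $Y$ a square-free word of length $6$. Then there exist a length-2 factor $a_1a_2$ of $X$ and a length-2 factor $b_1b_2$ of $Y$ (with $a_1,a_2,b_1,b_2$ letters) such that $a_1\notin\{b_1,b_2\}$ and $b_2\notin\{a_1,a_2\}$.
   Context: A word is square-free if it has no factor of the form $UU$ with $U$ nonempty. A factor is a contiguous subword. *)

theory Defs
  imports Main
begin

definition factor :: "'a list \<Rightarrow> 'a list \<Rightarrow> bool" where
  "factor u w \<longleftrightarrow> (\<exists>p s. w = p @ u @ s)"

definition square_free :: "'a list \<Rightarrow> bool" where
  "square_free w \<longleftrightarrow> \<not> (\<exists>u. u \<noteq> [] \<and> factor (u @ u) w)"

end

theory Submission
  imports Defs "HOL-Library.Sublist"
begin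

text \<open>
  Suppose that a \<in> {u, v} or v \<in> {a, b} for all length-2 factors ab of X = x1x2x3x4
  and uv of Y. Applied to the three factors of X this pins down every factor uv of Y.
  If x4 \<noteq> x1, then v \<in> {x2, x3}, so Y without its first letter is a square-free word
  of length 5 over two letters, which is impossible. If x4 = x1, then uv is the reverse
  of one of x1x2, x2x3, x3x1, so consecutive letters of Y follow a 3-cycle: Y has period 3
  and is therefore a square.
\<close>

lemma factor_eq_sublist: "factor = sublist"
  by (simp add: fun_eq_iff factor_def sublist_def)

lemma square_free_not_sublist_square:
  assumes "square_free w" and "u \<noteq> []"
  shows "\<not> sublist (u @ u) w"
  using assms by (auto simp: square_free_def factor_eq_sublist)

lemma square_free_sublist:
  assumes "square_free w" and "sublist v w"
  shows "square_free v"
  using assms by (auto simp: square_free_def factor_eq_sublist intro: sublist_order.order_trans)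

lemma square_free_adjacent_neq:
  assumes "square_free w" and "sublist [a, b] w"
  shows "a \<noteq> b"
  using square_free_not_sublist_square[OF assms(1), of "[a]"] assms(2) by auto

lemma square_free_binary_length_le:
  assumes "square_free w" and "set w \<subseteq> {a, b}"
  shows "length w \<le> 3"
proof (rule ccontr)
  assume "\<not> length w \<le> 3"
  then have "4 \<le> length w"
    by simp
  then obtain c1 c2 c3 c4 r where w: "w = c1 # c2 # c3 # c4 # r"
    by (auto simp: numeral_eq_Suc Suc_le_length_iff)
  let ?v = "[c1, c2, c3, c4]"
  have "sublist ?v w"
    by (simp add: w)
  with assms(1) have sf: "square_free ?v"
    by (rule square_free_sublist)
  have "c1 \<noteq> c2" "c2 \<noteq> c3" "c3 \<noteq> c4"
    using square_free_adjacent_neq[OF sf, of c1 c2] square_free_adjacent_neq[OF sf, of c2 c3]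
      square_free_adjacent_neq[OF sf, of c3 c4]
    by (simp_all add: sublist_code)
  moreover have "{c1, c2, c3, c4} \<subseteq> {a, b}"
    using assms(2) by (simp add: w)
  ultimately have "?v = [c1, c2] @ [c1, c2]"
    by auto
  then show False
    using square_free_not_sublist_square[OF sf, of "[c1, c2]"] by simp
qed

lemma set_tl_subset_if_adjacent:
  assumes "\<And>u v. sublist [u, v] w \<Longrightarrow> v \<in> A"
  shows "set (tl w) \<subseteq> A"
  using assms
proof (induction w rule: induct_list012)
  case (3 x y zs)
  have "y \<in> A"
    using "3.prems"[of x y] by (simp add: sublist_code)
  moreover have "set (tl (y # zs)) \<subseteq> A"
  proof (rule "3.IH"(2))
    show "v \<in> A" if "sublist [u, v] (y # zs)" for u v
      using that by (intro "3.prems"[of u]) (simp add: sublist_Cons_right)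
  qed
  ultimately show ?case
    by simp
qed simp_all

lemma not_square_free_if_adjacent_cyclic:
  assumes "6 \<le> length w" and "a \<noteq> b" "b \<noteq> c" "c \<noteq> a"
    and "\<And>u v. sublist [u, v] w \<Longrightarrow> (u, v) \<in> {(b, a), (c, b), (a, c)}"
  shows "\<not> square_free w"
proof
  assume sf: "square_free w"
  obtain y1 y2 y3 y4 y5 y6 r where w: "w = y1 # y2 # y3 # y4 # y5 # y6 # r"
    using assms(1) by (auto simp: numeral_eq_Suc Suc_le_length_iff)
  have "y4 = y1" "y5 = y2" "y6 = y3"
    using assms(5)[of y1 y2] assms(5)[of y2 y3] assms(5)[of y3 y4] assms(5)[of y4 y5]
      assms(5)[of y5 y6] assms(2-4)
    by (auto simp: w sublist_code)
  then show False
    using square_free_not_sublist_square[OF sf, of "[y1, y2, y3]"] by (simp add: w)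
qed

lemma blocked_pair_second_letter:
  assumes "x1 \<noteq> x2" "x2 \<noteq> x3" "x4 \<noteq> x1"
    and "x1 \<in> {u, v} \<or> v \<in> {x1, x2}"
    and "x2 \<in> {u, v} \<or> v \<in> {x2, x3}"
    and "x3 \<in> {u, v} \<or> v \<in> {x3, x4}"
  shows "v \<in> {x2, x3}"
  using assms by auto

lemma blocked_pair_cyclic:
  assumes "x1 \<noteq> x2" "x2 \<noteq> x3" "x3 \<noteq> x1"
    and "x1 \<in> {u, v} \<or> v \<in> {x1, x2}"
    and "x2 \<in> {u, v} \<or> v \<in> {x2, x3}"
    and "x3 \<in> {u, v} \<or> v \<in> {x3, x1}"
  shows "(u, v) \<in> {(x2, x1), (x3, x2), (x1, x3)}"
  using assms by auto

theorem mainTheorem8: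
  fixes X Y :: "'a list"
  assumes "square_free X" and "length X = 4"
    and "square_free Y" and "length Y = 6"
  shows "\<exists>a1 a2 b1 b2. factor [a1, a2] X \<and> factor [b1, b2] Y \<and>
           a1 \<notin> {b1, b2} \<and> b2 \<notin> {a1, a2}"
proof (rule ccontr)
  assume "\<not> ?thesis"
  then have blocked: "a1 \<in> {b1, b2} \<or> b2 \<in> {a1, a2}"
    if "sublist [a1, a2] X" "sublist [b1, b2] Y" for a1 a2 b1 b2
    using that by (auto simp: factor_eq_sublist)
  obtain x1 x2 x3 x4 where X: "X = [x1, x2, x3, x4]"
    using assms(2) by (auto simp: length_Suc_conv numeral_eq_Suc)
  have x: "x1 \<noteq> x2" "x2 \<noteq> x3" "x3 \<noteq> x4"
    using square_free_adjacent_neq[OF assms(1), of x1 x2]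
      square_free_adjacent_neq[OF assms(1), of x2 x3] square_free_adjacent_neq[OF assms(1), of x3 x4]
    by (simp_all add: X sublist_code)
  have blocked_by_X: "x1 \<in> {u, v} \<or> v \<in> {x1, x2}" "x2 \<in> {u, v} \<or> v \<in> {x2, x3}"
      "x3 \<in> {u, v} \<or> v \<in> {x3, x4}" if "sublist [u, v] Y" for u v
    using blocked[of x1 x2 u v] blocked[of x2 x3 u v] blocked[of x3 x4 u v] that
    by (simp_all add: X sublist_code)
  show False
  proof (cases "x4 = x1")
    case False
    have "set (tl Y) \<subseteq> {x2, x3}"
      by (rule set_tl_subset_if_adjacent) (rule blocked_pair_second_letter[OF x(1,2) False blocked_by_X])
    with square_free_sublist[OF assms(3) sublist_tl] have "length (tl Y) \<le> 3"
      by (rule square_free_binary_length_le)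
    with assms(4) show False
      by simp
  next
    case True
    have "\<not> square_free Y"
    proof (rule not_square_free_if_adjacent_cyclic[OF _ x(1,2) x(3)[unfolded True]])
      show "6 \<le> length Y"
        using assms(4) by simp
      show "(u, v) \<in> {(x2, x1), (x3, x2), (x1, x3)}" if "sublist [u, v] Y" for u v
        using blocked_pair_cyclic[OF x(1,2) x(3)[unfolded True] blocked_by_X[OF that, unfolded True]] .
    qed
    with assms(3) show False
      by contradiction
  qed
qed

end
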